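(* The addition operation on $\mathbb{Q}$ is not definable in the structure $\langle\mathbb{Q};<,\times\rangle$; that is, there is no first-order formula $\varphi(x,y,z)$ in the language $\{<,\times\}$ such that for all rationals $a,b,c$, $\langle\mathbb{Q};<,\times\rangle\models\varphi(a,b,c)$ iff $c=a+b$. *)

theory Defs
  imports Complex_Main
begin

datatype tm = Var nat | Mul tm tm

datatype fm =
    FTrue
  | FFalse
  | Eq tm tm
  | Less tm tm
  | Not fm
  | And fm fm
  | Or fm fm
  | Imp fm fm
  | Ex nat fm
  | All nat fm

fun tval :: "(nat \<Rightarrow> rat) \<Rightarrow> tm \<Rightarrow> rat" where
  "tval e (Var i) = e i"
| "tval e (Mul s t) = tval e s * tval e t"

fun sat :: "(nat \<Rightarrow> rat) \<Rightarrow> fm \<Rightarrow> bool" where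
  "sat e FTrue = True"
| "sat e FFalse = False"
| "sat e (Eq s t) = (tval e s = tval e t)"
| "sat e (Less s t) = (tval e s < tval e t)"
| "sat e (Not p) = (\<not> sat e p)"
| "sat e (And p q) = (sat e p \<and> sat e q)"
| "sat e (Or p q) = (sat e p \<or> sat e q)"
| "sat e (Imp p q) = (sat e p \<longrightarrow> sat e q)"
| "sat e (Ex x p) = (\<exists>a. sat (e(x := a)) p)"
| "sat e (All x p) = (\<forall>a. sat (e(x := a)) p)"

fun ftm :: "tm \<Rightarrow> nat set" where
  "ftm (Var i) = {i}"
| "ftm (Mul s t) = ftm s \<union> ftm t"

fun fv :: "fm \<Rightarrow> nat set" where
  "fv FTrue = {}"
| "fv FFalse = {}"
| "fv (Eq s t) = ftm s \<union> ftm t"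
| "fv (Less s t) = ftm s \<union> ftm t"
| "fv (Not p) = fv p"
| "fv (And p q) = fv p \<union> fv q"
| "fv (Or p q) = fv p \<union> fv q"
| "fv (Imp p q) = fv p \<union> fv q"
| "fv (Ex x p) = fv p - {x}"
| "fv (All x p) = fv p - {x}"

end

theory Submission
  imports Defs "HOL-Library.FuncSet"
begin

text \<open>An Ehrenfeucht-Fraisse argument. Call two assignments similar on a finite set of variables
  if their entries have the same signs and every integer combination \<open>\<Sum> c\<^sub>i log \<bar>e\<^sub>i\<bar>\<close> of
  small coefficient norm has the same sign for both. An atomic formula of small degree compares
  two monomials, that is, two signs and one such combination, so it cannot distinguish similar
  assignments. Passing a quantifier costs a smaller norm bound. A new value \<open>a\<close> is answered by
  \<open>b\<close> as follows: if \<open>log \<bar>a\<bar>\<close> satisfies a short integer relation with the old logarithms, \<open>b\<close>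
  must satisfy the corresponding relation on the other side, which is solvable in the rationals
  because the ratios \<open>e'\<^sub>i / e\<^sub>i\<close> are kept to be \<open>M\<close>-th powers for some \<open>M\<close> divisible by all small
  integers (whence the factorials); otherwise \<open>log \<bar>a\<bar>\<close> lies strictly inside a gap between
  finitely many quotients of such combinations, similarity maps it to a gap on the other side,
  and \<open>b\<close> is found there because logarithms of \<open>M\<close>-th powers of rationals are dense.
  As \<open>(1, 1, 2)\<close> and \<open>(1, 1, 2 \<cdot> 2\<^sup>M)\<close> are similar to every prescribed depth for suitable \<open>M\<close>,
  no formula defines \<open>c = a + b\<close>.\<close>

definition log_abs :: "rat \<Rightarrow> real" where
  "log_abs x = ln (real_of_rat \<bar>x\<bar>)"

definition log_comb :: "(nat \<Rightarrow> rat) \<Rightarrow> nat set \<Rightarrow> (nat \<Rightarrow> int) \<Rightarrow> real" where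
  "log_comb e V c = (\<Sum>i\<in>V. of_int (c i) * log_abs (e i))"

definition coeff_norm :: "nat set \<Rightarrow> (nat \<Rightarrow> int) \<Rightarrow> int" where
  "coeff_norm V c = (\<Sum>i\<in>V. \<bar>c i\<bar>)"

lemma log_abs_0 [simp]: "log_abs 0 = 0"
  by (simp add: log_abs_def)

lemma log_abs_1 [simp]: "log_abs 1 = 0"
  by (simp add: log_abs_def)

lemma log_abs_mult: "x \<noteq> 0 \<Longrightarrow> y \<noteq> 0 \<Longrightarrow> log_abs (x * y) = log_abs x + log_abs y"
  by (simp add: log_abs_def abs_mult of_rat_mult ln_mult)

lemma log_abs_mult_power:
  "x \<noteq> 0 \<Longrightarrow> 0 < u \<Longrightarrow> log_abs (x * u ^ m) = log_abs x + real m * ln (real_of_rat u)"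
  by (subst log_abs_mult) (simp_all add: log_abs_def of_rat_power ln_realpow)

lemma log_abs_less_iff: "x \<noteq> 0 \<Longrightarrow> y \<noteq> 0 \<Longrightarrow> log_abs x < log_abs y \<longleftrightarrow> \<bar>x\<bar> < \<bar>y\<bar>"
  by (simp add: log_abs_def of_rat_less)

lemma ln_of_rat_power_int:
  "0 < x \<Longrightarrow> ln (real_of_rat (x powi k)) = of_int k * ln (real_of_rat x)"
  by (simp add: power_int_def of_rat_power of_rat_inverse ln_realpow ln_inverse)

lemma log_comb_add: "log_comb e V (\<lambda>i. c i + d i) = log_comb e V c + log_comb e V d"
  by (simp add: log_comb_def sum.distrib algebra_simps)

lemma log_comb_diff: "log_comb e V (\<lambda>i. c i - d i) = log_comb e V c - log_comb e V d"
  by (simp add: log_comb_def sum_subtractf algebra_simps)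

lemma log_comb_scale: "log_comb e V (\<lambda>i. k * c i) = of_int k * log_comb e V c"
  by (simp add: log_comb_def sum_distrib_left algebra_simps)

lemma log_comb_uminus: "log_comb e V (\<lambda>i. - c i) = - log_comb e V c"
  by (simp add: log_comb_def sum_negf)

lemma log_comb_restrict: "log_comb e V (restrict c V) = log_comb e V c"
  by (simp add: log_comb_def)

lemma log_comb_insert:
  "finite V \<Longrightarrow> x \<notin> V \<Longrightarrow>
    log_comb (e(x := a)) (insert x V) c = of_int (c x) * log_abs a + log_comb e V c"
  unfolding log_comb_def by (simp add: sum.insert) (rule sum.cong, auto)

lemma coeff_norm_nonneg: "0 \<le> coeff_norm V c"
  by (simp add: coeff_norm_def sum_nonneg)

lemma coeff_norm_uminus: "coeff_norm V (\<lambda>i. - c i) = coeff_norm V c"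
  by (simp add: coeff_norm_def)

lemma coeff_norm_restrict: "coeff_norm V (restrict c V) = coeff_norm V c"
  by (simp add: coeff_norm_def)

lemma coeff_norm_insert: "finite V \<Longrightarrow> x \<notin> V \<Longrightarrow> coeff_norm (insert x V) c = \<bar>c x\<bar> + coeff_norm V c"
  by (simp add: coeff_norm_def)

lemma abs_le_coeff_norm: "finite V \<Longrightarrow> i \<in> V \<Longrightarrow> \<bar>c i\<bar> \<le> coeff_norm V c"
  unfolding coeff_norm_def by (rule member_le_sum) auto

lemma coeff_norm_diff_le: "coeff_norm V (\<lambda>i. c i - d i) \<le> coeff_norm V c + coeff_norm V d"
  unfolding coeff_norm_def sum.distrib[symmetric] by (rule sum_mono) (rule abs_triangle_ineq4)

lemma coeff_norm_scale: "coeff_norm V (\<lambda>i. k * c i) = \<bar>k\<bar> * coeff_norm V c"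
  by (simp add: coeff_norm_def abs_mult sum_distrib_left)

lemma coeff_norm_cross_le:
  assumes "coeff_norm V c + \<bar>j\<bar> \<le> int n" and "coeff_norm V c' + \<bar>j'\<bar> \<le> int n"
    and "2 * n * n \<le> N"
  shows "coeff_norm V (\<lambda>i. j' * c i - j * c' i) \<le> int N"
proof -
  have "coeff_norm V (\<lambda>i. j' * c i - j * c' i) \<le> \<bar>j'\<bar> * coeff_norm V c + \<bar>j\<bar> * coeff_norm V c'"
    using coeff_norm_diff_le[of V "\<lambda>i. j' * c i" "\<lambda>i. j * c' i"] by (simp add: coeff_norm_scale)
  also have "\<dots> \<le> int n * int n + int n * int n"
    using assms coeff_norm_nonneg[of V c] coeff_norm_nonneg[of V c']
    by (intro add_mono mult_mono) auto
  also have "\<dots> = int (2 * n * n)" by simp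
  also have "\<dots> \<le> int N" using assms(3) by (rule of_nat_mono)
  finally show ?thesis .
qed

fun tm_exp :: "tm \<Rightarrow> nat \<Rightarrow> nat" where
  "tm_exp (Var i) = (\<lambda>j. if j = i then 1 else 0)"
| "tm_exp (Mul s t) = (\<lambda>j. tm_exp s j + tm_exp t j)"

fun tm_deg :: "tm \<Rightarrow> nat" where
  "tm_deg (Var i) = 1"
| "tm_deg (Mul s t) = tm_deg s + tm_deg t"

lemma sgn_tval_eq: "(\<And>i. i \<in> ftm t \<Longrightarrow> sgn (e i) = sgn (e' i)) \<Longrightarrow> sgn (tval e t) = sgn (tval e' t)"
  by (induction t) (auto simp: sgn_mult)

lemma log_abs_tval:
  assumes "finite V" "ftm t \<subseteq> V" "tval e t \<noteq> 0"
  shows "log_abs (tval e t) = log_comb e V (\<lambda>i. int (tm_exp t i))"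
  using assms
proof (induction t)
  case (Var i)
  have "log_comb e V (\<lambda>j. int (tm_exp (Var i) j)) = (\<Sum>j\<in>V. if j = i then log_abs (e j) else 0)"
    unfolding log_comb_def by (rule sum.cong) auto
  then show ?case using Var by (simp add: sum.delta)
next
  case (Mul s t)
  then show ?case by (simp add: log_abs_mult log_comb_add)
qed

lemma sum_tm_exp_le_deg: "finite V \<Longrightarrow> (\<Sum>i\<in>V. tm_exp t i) \<le> tm_deg t"
  by (induction t) (simp_all add: sum.delta sum.distrib add_mono)

lemma coeff_norm_tm_exp_diff_le:
  assumes "finite V"
  shows "coeff_norm V (\<lambda>i. int (tm_exp s i) - int (tm_exp t i)) \<le> int (tm_deg s + tm_deg t)"
proof -
  have "coeff_norm V (\<lambda>i. int (tm_exp s i)) = int (\<Sum>i\<in>V. tm_exp s i)"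
    and "coeff_norm V (\<lambda>i. int (tm_exp t i)) = int (\<Sum>i\<in>V. tm_exp t i)"
    by (simp_all add: coeff_norm_def)
  then show ?thesis
    using coeff_norm_diff_le[of V "\<lambda>i. int (tm_exp s i)" "\<lambda>i. int (tm_exp t i)"]
      sum_tm_exp_le_deg[OF assms, of s] sum_tm_exp_le_deg[OF assms, of t]
    by linarith
qed

lemma eq_less_iff_by_sgn_abs:
  fixes x y x' y' :: "'a :: linordered_idom"
  assumes "sgn x = sgn x'" "sgn y = sgn y'"
    and "\<bar>x\<bar> < \<bar>y\<bar> \<longleftrightarrow> \<bar>x'\<bar> < \<bar>y'\<bar>" "\<bar>y\<bar> < \<bar>x\<bar> \<longleftrightarrow> \<bar>y'\<bar> < \<bar>x'\<bar>"
  shows "(x = y \<longleftrightarrow> x' = y') \<and> (x < y \<longleftrightarrow> x' < y')"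
  using assms by (auto simp: sgn_if abs_if split: if_splits)

definition similar :: "nat \<Rightarrow> nat \<Rightarrow> nat set \<Rightarrow> (nat \<Rightarrow> rat) \<Rightarrow> (nat \<Rightarrow> rat) \<Rightarrow> bool" where
  "similar N M V e e' \<longleftrightarrow> finite V \<and>
     (\<forall>i\<in>V. \<exists>u>0. e' i = e i * u ^ M) \<and>
     (\<forall>c. coeff_norm V c \<le> int N \<longrightarrow> sgn (log_comb e V c) = sgn (log_comb e' V c))"

lemma similar_sgn: "similar N M V e e' \<Longrightarrow> i \<in> V \<Longrightarrow> sgn (e i) = sgn (e' i)"
  by (auto simp: similar_def sgn_mult)

lemma similar_sym: "similar N M V e e' \<Longrightarrow> similar N M V e' e"
  unfolding similar_def
proof (elim conjE, intro conjI ballI)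
  fix i assume "\<forall>i\<in>V. \<exists>u>0. e' i = e i * u ^ M" and "i \<in> V"
  then obtain u where "0 < u" "e' i = e i * u ^ M" by blast
  then show "\<exists>u>0. e i = e' i * u ^ M"
    by (intro exI[of _ "inverse u"]) (simp add: power_inverse)
qed auto

lemma similar_mono:
  assumes sim: "similar N M V e e'" and "W \<subseteq> V" and "N' \<le> N"
  shows "similar N' M W e e'"
proof -
  have fin: "finite V" using sim by (simp add: similar_def)
  have "sgn (log_comb e W c) = sgn (log_comb e' W c)" if "coeff_norm W c \<le> int N'" for c
  proof -
    define c' where "c' = (\<lambda>i. if i \<in> W then c i else 0)"
    have "coeff_norm V c' = coeff_norm W c" unfolding coeff_norm_def c'_def
      by (rule sum.mono_neutral_cong_right) (use fin assms(2) in auto)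
    moreover have "log_comb f V c' = log_comb f W c" for f unfolding log_comb_def c'_def
      by (rule sum.mono_neutral_cong_right) (use fin assms(2) in auto)
    ultimately show ?thesis using sim that assms(3) unfolding similar_def
      by (metis of_nat_le_iff order_trans)
  qed
  then show ?thesis using sim assms(2) finite_subset unfolding similar_def by blast
qed

lemma similar_abs_tval_less_iff:
  assumes sim: "similar N M V e e'" and "ftm s \<union> ftm t \<subseteq> V" and "tm_deg s + tm_deg t \<le> N"
  shows "\<bar>tval e s\<bar> < \<bar>tval e t\<bar> \<longleftrightarrow> \<bar>tval e' s\<bar> < \<bar>tval e' t\<bar>"
proof -
  have fin: "finite V" using sim by (simp add: similar_def)
  have sgn_s: "sgn (tval e s) = sgn (tval e' s)" and sgn_t: "sgn (tval e t) = sgn (tval e' t)"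
    using sgn_tval_eq similar_sgn[OF sim] assms(2) by blast+
  show ?thesis
  proof (cases "tval e s = 0 \<or> tval e t = 0")
    case True
    then show ?thesis using sgn_s sgn_t by (auto simp: sgn_0_0)
  next
    case False
    then have nonzero: "tval e' s \<noteq> 0" "tval e' t \<noteq> 0"
      using sgn_s sgn_t by (auto simp: sgn_0_0)
    define c where "c = (\<lambda>i. int (tm_exp s i) - int (tm_exp t i))"
    have "coeff_norm V c \<le> int N"
      using coeff_norm_tm_exp_diff_le[OF fin, of s t] assms(3) unfolding c_def by linarith
    then have "sgn (log_comb e V c) = sgn (log_comb e' V c)" using sim by (simp add: similar_def)
    moreover have "log_comb f V c = log_abs (tval f s) - log_abs (tval f t)"
      if "tval f s \<noteq> 0" "tval f t \<noteq> 0" for f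
      using that assms(2) by (simp add: c_def log_comb_diff log_abs_tval[OF fin])
    ultimately have "log_abs (tval e s) < log_abs (tval e t) \<longleftrightarrow> log_abs (tval e' s) < log_abs (tval e' t)"
      using False nonzero by (auto simp: sgn_if split: if_splits)
    then show ?thesis using False nonzero by (simp add: log_abs_less_iff)
  qed
qed

lemma similar_atom:
  assumes sim: "similar N M V e e'" and "ftm s \<union> ftm t \<subseteq> V" and "tm_deg s + tm_deg t \<le> N"
  shows "(tval e s = tval e t \<longleftrightarrow> tval e' s = tval e' t) \<and> (tval e s < tval e t \<longleftrightarrow> tval e' s < tval e' t)"
proof (rule eq_less_iff_by_sgn_abs)
  show "sgn (tval e s) = sgn (tval e' s)" "sgn (tval e t) = sgn (tval e' t)"
    using sgn_tval_eq similar_sgn[OF sim] assms(2) by blast+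
  show "\<bar>tval e s\<bar> < \<bar>tval e t\<bar> \<longleftrightarrow> \<bar>tval e' s\<bar> < \<bar>tval e' t\<bar>"
    using similar_abs_tval_less_iff[OF assms] .
  show "\<bar>tval e t\<bar> < \<bar>tval e s\<bar> \<longleftrightarrow> \<bar>tval e' t\<bar> < \<bar>tval e' s\<bar>"
    by (rule similar_abs_tval_less_iff[OF sim]) (use assms in auto)
qed

lemma similar_insertI:
  assumes sim: "similar N (m * M) V e e'" and "x \<notin> V" and "0 < u"
    and agree: "\<And>c j. coeff_norm V c + \<bar>j\<bar> \<le> int n \<Longrightarrow>
      sgn (of_int j * log_abs a + log_comb e V c) = sgn (of_int j * log_abs (a * u ^ M) + log_comb e' V c)"
  shows "similar n M (insert x V) (e(x := a)) (e'(x := a * u ^ M))"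
proof -
  have fin: "finite V" using sim by (simp add: similar_def)
  have "\<exists>v>0. e' i = e i * v ^ M" if "i \<in> V" for i
  proof -
    have "\<exists>v>0. e' i = e i * v ^ (m * M)" using sim that by (simp add: similar_def)
    then obtain v where "0 < v" "e' i = e i * v ^ (m * M)" by blast
    then show ?thesis by (intro exI[of _ "v ^ m"]) (simp add: power_mult)
  qed
  moreover have "sgn (log_comb (e(x := a)) (insert x V) c) = sgn (log_comb (e'(x := a * u ^ M)) (insert x V) c)"
    if "coeff_norm (insert x V) c \<le> int n" for c
    using agree[of c "c x"] that fin assms(2) by (simp add: log_comb_insert coeff_norm_insert add.commute)
  ultimately show ?thesis using fin \<open>0 < u\<close> unfolding similar_def by auto
qed

lemma similar_log_ratios:
  assumes "similar N M V e e'"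
  obtains u where "\<forall>i\<in>V. 0 < u i \<and> log_abs (e' i) = log_abs (e i) + real M * ln (real_of_rat (u i))"
proof -
  have "\<exists>u>0. log_abs (e' i) = log_abs (e i) + real M * ln (real_of_rat u)" if "i \<in> V" for i
  proof -
    have "\<exists>u>0. e' i = e i * u ^ M" using assms that by (simp add: similar_def)
    then obtain u where u: "0 < u" "e' i = e i * u ^ M" by blast
    show ?thesis
    proof (cases "e i = 0")
      case True
      then show ?thesis using u by (intro exI[of _ 1]) simp
    next
      case False
      then show ?thesis using u by (auto simp: log_abs_mult_power)
    qed
  qed
  then show ?thesis using that by metis
qed

lemma similar_log_comb_eq:
  assumes sim: "similar N M V e e'"
  obtains w where "0 < w" "log_comb e' V c = log_comb e V c - real M * ln (real_of_rat w)"
proof -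
  have fin: "finite V" using sim by (simp add: similar_def)
  obtain u where u: "\<forall>i\<in>V. 0 < u i \<and> log_abs (e' i) = log_abs (e i) + real M * ln (real_of_rat (u i))"
    using similar_log_ratios[OF sim] by blast
  define w where "w = (\<Prod>i\<in>V. u i powi (- c i))"
  have "0 < w" using u by (auto simp: w_def intro!: prod_pos)
  have "ln (real_of_rat w) = (\<Sum>i\<in>V. ln (real_of_rat (u i powi (- c i))))"
    unfolding w_def of_rat_prod using fin u by (subst ln_prod) auto
  also have "\<dots> = - (\<Sum>i\<in>V. of_int (c i) * ln (real_of_rat (u i)))"
    using u by (simp add: ln_of_rat_power_int sum_negf)
  finally have "ln (real_of_rat w) = - (\<Sum>i\<in>V. of_int (c i) * ln (real_of_rat (u i)))" .
  moreover have "log_comb e' V c = log_comb e V c + real M * (\<Sum>i\<in>V. of_int (c i) * ln (real_of_rat (u i)))"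
    using u unfolding log_comb_def by (simp add: sum.distrib sum_distrib_left algebra_simps)
  ultimately show ?thesis using \<open>0 < w\<close> that by simp
qed

text \<open>Scaling by \<open>j0\<close> and subtracting the relation \<open>c0\<close> eliminates \<open>A\<close> and \<open>B\<close>.\<close>

lemma similar_sgn_eliminate:
  assumes sim: "similar N M V e e'" and N: "2 * n * n \<le> N"
    and c0: "coeff_norm V c0 + j0 \<le> int n" "0 < j0"
    and rel: "of_int j0 * A + log_comb e V c0 = 0" "of_int j0 * B + log_comb e' V c0 = 0"
    and c: "coeff_norm V c + \<bar>j\<bar> \<le> int n"
  shows "sgn (of_int j * A + log_comb e V c) = sgn (of_int j * B + log_comb e' V c)"
proof -
  define d where "d = (\<lambda>i. j0 * c i - j * c0 i)"
  have "coeff_norm V d \<le> int N"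
    using coeff_norm_cross_le[OF c _ N, of c0 j0] c0 unfolding d_def by simp
  then have "sgn (log_comb e V d) = sgn (log_comb e' V d)" using sim by (simp add: similar_def)
  moreover have "log_comb e V c0 = - (of_int j0 * A)" "log_comb e' V c0 = - (of_int j0 * B)"
    using rel by (simp_all add: eq_neg_iff_add_eq_0 add.commute)
  then have "log_comb e V d = of_int j0 * (of_int j * A + log_comb e V c)"
    and "log_comb e' V d = of_int j0 * (of_int j * B + log_comb e' V c)"
    by (simp_all add: d_def log_comb_diff log_comb_scale algebra_simps)
  ultimately show ?thesis using c0(2) by (simp add: sgn_mult)
qed

lemma extend_dependent:
  assumes sim: "similar N (fact n * M) V e e'" and N: "2 * n * n \<le> N" and "a \<noteq> 0"
    and c0: "coeff_norm V c0 + j0 \<le> int n" "0 < j0" "of_int j0 * log_abs a + log_comb e V c0 = 0"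
  shows "\<exists>u>0. \<forall>c j. coeff_norm V c + \<bar>j\<bar> \<le> int n \<longrightarrow>
    sgn (of_int j * log_abs a + log_comb e V c) = sgn (of_int j * log_abs (a * u ^ M) + log_comb e' V c)"
proof -
  obtain W where "0 < W" and W: "log_comb e' V c0 = log_comb e V c0 - real (fact n * M) * ln (real_of_rat W)"
    using similar_log_comb_eq[OF sim] .
  define q where "q = fact n div nat j0"
  have jq: "real_of_int j0 * real q = fact n"
  proof -
    have "nat j0 dvd fact n" using c0 coeff_norm_nonneg[of V c0] by (intro dvd_fact) auto
    then have "nat j0 * q = fact n" unfolding q_def by (rule dvd_mult_div_cancel)
    then have "real (nat j0) * real q = fact n" by (metis of_nat_mult of_nat_fact)
    then show ?thesis using c0(2) by simp
  qed
  have "of_int j0 * log_abs (a * (W ^ q) ^ M) + log_comb e' V c0 = of_int j0 * log_abs a + log_comb e V c0"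
    using \<open>a \<noteq> 0\<close> \<open>0 < W\<close>
    by (simp add: log_abs_mult_power W of_rat_power ln_realpow algebra_simps flip: jq)
  then have "of_int j0 * log_abs (a * (W ^ q) ^ M) + log_comb e' V c0 = 0" using c0(3) by simp
  then show ?thesis
    using \<open>0 < W\<close> similar_sgn_eliminate[OF sim N c0(1,2) c0(3)] by (metis zero_less_power)
qed

lemma sgn_comb_eq_from_positive:
  assumes zero: "\<And>c. coeff_norm V c \<le> int n \<Longrightarrow> sgn (log_comb e V c) = sgn (log_comb e' V c)"
    and pos: "\<And>c j. coeff_norm V c + j \<le> int n \<Longrightarrow> 0 < j \<Longrightarrow>
      sgn (of_int j * A + log_comb e V c) = sgn (of_int j * B + log_comb e' V c)"
    and "coeff_norm V c + \<bar>j\<bar> \<le> int n"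
  shows "sgn (of_int j * A + log_comb e V c) = sgn (of_int j * B + log_comb e' V c)"
proof (cases j "0 :: int" rule: linorder_cases)
  case less
  have "sgn (of_int (- j) * A + log_comb e V (\<lambda>i. - c i)) =
      sgn (of_int (- j) * B + log_comb e' V (\<lambda>i. - c i))"
    using less assms(3) by (intro pos) (simp_all add: coeff_norm_uminus)
  then have "sgn (- (of_int j * A + log_comb e V c)) = sgn (- (of_int j * B + log_comb e' V c))"
    by (simp add: log_comb_uminus)
  then show ?thesis by (simp only: sgn_minus neg_equal_iff_equal)
qed (use assms in auto)

lemma finite_separated_interval:
  fixes A B :: "real set"
  assumes "finite A" "finite B" "\<forall>x\<in>A. \<forall>y\<in>B. x < y"
  obtains lo hi where "lo < hi" "\<forall>x\<in>A. x \<le> lo" "\<forall>y\<in>B. hi \<le> y"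
proof -
  define lo where "lo = (if A = {} then Min B - 1 else Max A)"
  have lo: "\<forall>x\<in>A. x \<le> lo" "\<forall>y\<in>B. lo < y"
    using assms by (auto simp: lo_def dest: Min_le[OF assms(2)])
  show ?thesis
    by (rule that[of lo "Min (insert (lo + 1) B)"]) (use lo assms(2) in auto)
qed

lemma exists_rat_power_ln_between:
  fixes lo hi :: real
  assumes "lo < hi" and "0 < m"
  obtains u :: rat where "0 < u" "lo < real m * ln (real_of_rat u)" "real m * ln (real_of_rat u) < hi"
proof -
  have "exp (lo / m) < exp (hi / m)" using assms by (simp add: divide_strict_right_mono)
  then obtain u :: rat where u: "exp (lo / m) < of_rat u" "of_rat u < exp (hi / m)"
    using of_rat_dense by blast
  have "0 < u" using u(1) by (metis exp_gt_zero order.strict_trans zero_less_of_rat_iff)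
  moreover have "lo / m < ln (of_rat u)" "ln (of_rat u) < hi / m"
    using u \<open>0 < u\<close> by (simp_all add: ln_less_cancel_iff [symmetric] zero_less_of_rat_iff)
  ultimately show ?thesis using that assms(2) by (simp add: field_simps)
qed

lemma finite_bounded_coeffs:
  assumes "finite V"
  shows "finite {(c, j). c \<in> extensional V \<and> coeff_norm V c + j \<le> int n \<and> 0 < j}"
proof (rule finite_subset)
  show "{(c, j). c \<in> extensional V \<and> coeff_norm V c + j \<le> int n \<and> 0 < j}
      \<subseteq> (V \<rightarrow>\<^sub>E {- int n..int n}) \<times> {0..int n}"
  proof
    fix p assume "p \<in> {(c, j). c \<in> extensional V \<and> coeff_norm V c + j \<le> int n \<and> 0 < j}"
    then obtain c j where p: "p = (c, j)"
      and c: "c \<in> extensional V" "coeff_norm V c + j \<le> int n" "0 < j" by blast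
    then have "- int n \<le> c i \<and> c i \<le> int n" if "i \<in> V" for i
      using abs_le_coeff_norm[OF assms that, of c] unfolding abs_le_iff by linarith
    then show "p \<in> (V \<rightarrow>\<^sub>E {- int n..int n}) \<times> {0..int n}"
      using p c coeff_norm_nonneg[of V c] by (auto simp: PiE_iff)
  qed
  show "finite ((V \<rightarrow>\<^sub>E {- int n..int n}) \<times> {0..int n})"
    using assms by (simp add: finite_PiE)
qed

lemma similar_ratio_less:
  assumes sim: "similar N M V e e'" and N: "2 * n * n \<le> N"
    and c: "coeff_norm V c + j \<le> int n" "0 < j" and c': "coeff_norm V c' + j' \<le> int n" "0 < j'"
    and less: "- log_comb e V c / of_int j < - log_comb e V c' / of_int j'"
  shows "- log_comb e' V c / of_int j < - log_comb e' V c' / of_int j'"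
proof -
  define d where "d = (\<lambda>i. j' * c i - j * c' i)"
  have "coeff_norm V d \<le> int N"
    using coeff_norm_cross_le[of V c j n c' j' N] c c' N unfolding d_def by simp
  then have "sgn (log_comb e V d) = sgn (log_comb e' V d)" using sim by (simp add: similar_def)
  moreover have "- log_comb f V c / of_int j < - log_comb f V c' / of_int j' \<longleftrightarrow> 0 < log_comb f V d" for f
    using c(2) c'(2) by (simp add: d_def log_comb_diff log_comb_scale field_simps)
  ultimately show ?thesis using less by (metis sgn_1_pos)
qed

lemma similar_gap:
  assumes sim: "similar N M V e e'" and N: "2 * n * n \<le> N"
  obtains lo hi where "lo < hi"
    and "\<And>c j. coeff_norm V c + j \<le> int n \<Longrightarrow> 0 < j \<Longrightarrow>
      - log_comb e V c / of_int j < A \<Longrightarrow> - log_comb e' V c / of_int j \<le> lo"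
    and "\<And>c j. coeff_norm V c + j \<le> int n \<Longrightarrow> 0 < j \<Longrightarrow>
      A < - log_comb e V c / of_int j \<Longrightarrow> hi \<le> - log_comb e' V c / of_int j"
proof -
  have fin: "finite V" using sim by (simp add: similar_def)
  define T where "T = {(c, j). c \<in> extensional V \<and> coeff_norm V c + j \<le> int n \<and> 0 < j}"
  define r where "r f = (\<lambda>(c, j). - log_comb f V c / of_int j)" for f
  define Lo where "Lo = {p \<in> T. r e p < A}"
  define Up where "Up = {p \<in> T. A < r e p}"
  have "\<forall>x\<in>r e' ` Lo. \<forall>y\<in>r e' ` Up. x < y"
    using similar_ratio_less[OF sim N] by (force simp: Lo_def Up_def T_def r_def)
  moreover have "finite (r e' ` Lo)" "finite (r e' ` Up)"
    using finite_bounded_coeffs[OF fin, of n] by (simp_all add: Lo_def Up_def T_def)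
  ultimately obtain lo hi where lh: "lo < hi" "\<forall>x\<in>r e' ` Lo. x \<le> lo" "\<forall>y\<in>r e' ` Up. hi \<le> y"
    using finite_separated_interval by metis
  have "(restrict c V, j) \<in> T" and "r f (restrict c V, j) = - log_comb f V c / of_int j"
    if "coeff_norm V c + j \<le> int n" "0 < j" for f c j
    using that by (simp_all add: T_def r_def coeff_norm_restrict log_comb_restrict)
  then show ?thesis using that[OF lh(1)] lh(2,3) by (fastforce simp: Lo_def Up_def)
qed

lemma sgn_mult_add_eq_sgn_diff:
  fixes x L :: real
  assumes "0 < j"
  shows "sgn (of_int j * x + L) = sgn (x - - L / of_int j)"
  using assms by (simp add: sgn_if field_simps)

lemma extend_independent:
  assumes sim: "similar N M V e e'" and N: "2 * n * n \<le> N" and "0 < M'" and "a \<noteq> 0"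
    and indep: "\<And>c j. coeff_norm V c + j \<le> int n \<Longrightarrow> 0 < j \<Longrightarrow> of_int j * log_abs a + log_comb e V c \<noteq> 0"
  shows "\<exists>u>0. \<forall>c j. coeff_norm V c + \<bar>j\<bar> \<le> int n \<longrightarrow>
    sgn (of_int j * log_abs a + log_comb e V c) = sgn (of_int j * log_abs (a * u ^ M') + log_comb e' V c)"
proof -
  obtain lo hi where lh: "lo < hi"
    and lo: "\<And>c j. coeff_norm V c + j \<le> int n \<Longrightarrow> 0 < j \<Longrightarrow>
      - log_comb e V c / of_int j < log_abs a \<Longrightarrow> - log_comb e' V c / of_int j \<le> lo"
    and hi: "\<And>c j. coeff_norm V c + j \<le> int n \<Longrightarrow> 0 < j \<Longrightarrow>
      log_abs a < - log_comb e V c / of_int j \<Longrightarrow> hi \<le> - log_comb e' V c / of_int j"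
    using similar_gap[OF sim N] by blast
  obtain u where u: "0 < u" "lo - log_abs a < real M' * ln (real_of_rat u)"
      "real M' * ln (real_of_rat u) < hi - log_abs a"
    using exists_rat_power_ln_between[of "lo - log_abs a" "hi - log_abs a" M'] lh \<open>0 < M'\<close> by auto
  define b where "b = a * u ^ M'"
  have b: "lo < log_abs b" "log_abs b < hi"
    using u \<open>a \<noteq> 0\<close> by (simp_all add: b_def log_abs_mult_power)
  have "sgn (of_int j * log_abs a + log_comb e V c) = sgn (of_int j * log_abs b + log_comb e' V c)"
    if c: "coeff_norm V c + j \<le> int n" "0 < j" for c j
  proof -
    have "- log_comb e V c / of_int j \<noteq> log_abs a" using indep[OF c] c(2) by (auto simp: field_simps)
    then consider "- log_comb e V c / of_int j < log_abs a" "- log_comb e' V c / of_int j < log_abs b"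
      | "log_abs a < - log_comb e V c / of_int j" "log_abs b < - log_comb e' V c / of_int j"
      using lo[OF c] hi[OF c] b by fastforce
    then show ?thesis by cases (simp_all add: sgn_mult_add_eq_sgn_diff[OF c(2)])
  qed
  moreover have "sgn (log_comb e V c) = sgn (log_comb e' V c)" if "coeff_norm V c \<le> int n" for c
  proof -
    have "n \<le> N" using N le_square[of n] by linarith
    then show ?thesis using sim that unfolding similar_def by (meson order_trans of_nat_mono)
  qed
  ultimately show ?thesis
    using \<open>0 < u\<close> sgn_comb_eq_from_positive[where A = "log_abs a" and B = "log_abs b"]
    unfolding b_def by blast
qed

lemma similar_extend:
  assumes sim: "similar N (fact n * M) V e e'" and N: "2 * n * n + n \<le> N" and "0 < M" and "x \<notin> V"
  shows "\<exists>b. similar n M (insert x V) (e(x := a)) (e'(x := b))"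
proof -
  have N2: "2 * n * n \<le> N" using N by simp
  have "\<exists>u>0. \<forall>c j. coeff_norm V c + \<bar>j\<bar> \<le> int n \<longrightarrow>
    sgn (of_int j * log_abs a + log_comb e V c) = sgn (of_int j * log_abs (a * u ^ M) + log_comb e' V c)"
  proof (cases "a = 0")
    case True
    show ?thesis
    proof (intro exI[of _ 1] conjI allI impI)
      fix c j assume "coeff_norm V c + \<bar>j\<bar> \<le> int n"
      then have "coeff_norm V c \<le> int N" using N by linarith
      then show "sgn (of_int j * log_abs a + log_comb e V c) =
          sgn (of_int j * log_abs (a * 1 ^ M) + log_comb e' V c)"
        using sim True by (simp add: similar_def)
    qed simp
  next
    case False
    show ?thesis
    proof (cases "\<exists>c0 j0. coeff_norm V c0 + j0 \<le> int n \<and> 0 < j0 \<and>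
        of_int j0 * log_abs a + log_comb e V c0 = 0")
      case True
      then show ?thesis using extend_dependent[OF sim N2 False] by blast
    next
      case indep: False
      show ?thesis by (rule extend_independent[OF sim N2 \<open>0 < M\<close> False]) (use indep in blast)
    qed
  qed
  then obtain u where "0 < u" and agree: "\<forall>c j. coeff_norm V c + \<bar>j\<bar> \<le> int n \<longrightarrow>
    sgn (of_int j * log_abs a + log_comb e V c) = sgn (of_int j * log_abs (a * u ^ M) + log_comb e' V c)"
    by blast
  show ?thesis
    by (rule exI, rule similar_insertI[OF sim \<open>x \<notin> V\<close> \<open>0 < u\<close>]) (use agree in blast)
qed

fun qdepth :: "fm \<Rightarrow> nat" where
  "qdepth (Not p) = qdepth p"
| "qdepth (And p q) = max (qdepth p) (qdepth q)"
| "qdepth (Or p q) = max (qdepth p) (qdepth q)"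
| "qdepth (Imp p q) = max (qdepth p) (qdepth q)"
| "qdepth (Ex x p) = Suc (qdepth p)"
| "qdepth (All x p) = Suc (qdepth p)"
| "qdepth _ = 0"

fun atom_deg :: "fm \<Rightarrow> nat" where
  "atom_deg (Eq s t) = tm_deg s + tm_deg t"
| "atom_deg (Less s t) = tm_deg s + tm_deg t"
| "atom_deg (Not p) = atom_deg p"
| "atom_deg (And p q) = max (atom_deg p) (atom_deg q)"
| "atom_deg (Or p q) = max (atom_deg p) (atom_deg q)"
| "atom_deg (Imp p q) = max (atom_deg p) (atom_deg q)"
| "atom_deg (Ex x p) = atom_deg p"
| "atom_deg (All x p) = atom_deg p"
| "atom_deg _ = 0"

fun norm_bound :: "nat \<Rightarrow> nat \<Rightarrow> nat" where
  "norm_bound 0 D = D"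
| "norm_bound (Suc k) D = 2 * norm_bound k D * norm_bound k D + norm_bound k D"

fun exp_bound :: "nat \<Rightarrow> nat \<Rightarrow> nat" where
  "exp_bound 0 D = 1"
| "exp_bound (Suc k) D = fact (norm_bound k D) * exp_bound k D"

lemma le_norm_bound: "D \<le> norm_bound k D"
  by (induction k) auto

lemma exp_bound_pos: "0 < exp_bound k D"
  by (induction k) auto

lemma similar_step:
  assumes "similar (norm_bound (Suc k) D) (exp_bound (Suc k) D) V e e'"
  shows "\<exists>b. similar (norm_bound k D) (exp_bound k D) (insert x (V - {x})) (e(x := a)) (e'(x := b))"
proof (rule similar_extend)
  show "similar (norm_bound (Suc k) D) (fact (norm_bound k D) * exp_bound k D) (V - {x}) e e'"
    using similar_mono[OF assms] by simp
qed (simp_all add: exp_bound_pos)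

lemma sat_quantifier_transfer:
  assumes "\<And>a. \<exists>b. R (e(x := a)) (e'(x := b))" and "\<And>a. \<exists>b. R (e'(x := a)) (e(x := b))"
    and "\<And>f f'. R f f' \<Longrightarrow> sat f p \<longleftrightarrow> sat f' p"
  shows "sat e (Ex x p) \<longleftrightarrow> sat e' (Ex x p)" and "sat e (All x p) \<longleftrightarrow> sat e' (All x p)"
  using assms by simp_all metis+

lemma similar_quantifier:
  assumes sim: "similar (norm_bound (Suc k) D) (exp_bound (Suc k) D) V e e'"
    and IH: "\<And>f f'. similar (norm_bound k D) (exp_bound k D) (insert x (V - {x})) f f' \<Longrightarrow>
      sat f p \<longleftrightarrow> sat f' p"
  shows "sat e (Ex x p) \<longleftrightarrow> sat e' (Ex x p)" and "sat e (All x p) \<longleftrightarrow> sat e' (All x p)"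
  using sat_quantifier_transfer[OF similar_step[OF sim] similar_step[OF similar_sym[OF sim]] IH] by blast+

lemma similar_sat_iff:
  assumes "atom_deg \<phi> \<le> D" and "qdepth \<phi> \<le> k" and "fv \<phi> \<subseteq> V"
    and "similar (norm_bound k D) (exp_bound k D) V e e'"
  shows "sat e \<phi> \<longleftrightarrow> sat e' \<phi>"
  using assms
proof (induction \<phi> arbitrary: k V e e')
  case (Eq s t)
  then show ?case using similar_atom le_norm_bound[of D k] by fastforce
next
  case (Less s t)
  then show ?case using similar_atom le_norm_bound[of D k] by fastforce
next
  case (Ex x p)
  then obtain k' where k: "k = Suc k'" by (cases k) auto
  show ?case
  proof (rule similar_quantifier(1))
    show "similar (norm_bound (Suc k') D) (exp_bound (Suc k') D) V e e'" using Ex.prems k by simp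
    show "sat f p \<longleftrightarrow> sat f' p"
      if "similar (norm_bound k' D) (exp_bound k' D) (insert x (V - {x})) f f'" for f f'
      using Ex.IH[OF _ _ _ that] Ex.prems k by auto
  qed
next
  case (All x p)
  then obtain k' where k: "k = Suc k'" by (cases k) auto
  show ?case
  proof (rule similar_quantifier(2))
    show "similar (norm_bound (Suc k') D) (exp_bound (Suc k') D) V e e'" using All.prems k by simp
    show "sat f p \<longleftrightarrow> sat f' p"
      if "similar (norm_bound k' D) (exp_bound k' D) (insert x (V - {x})) f f'" for f f'
      using All.IH[OF _ _ _ that] All.prems k by auto
  qed
qed auto

lemma similar_one_one_two:
  "similar N M {0, 1, 2} ((\<lambda>_. 0)(0 := 1, 1 := 1, 2 := 2)) ((\<lambda>_. 0)(0 := 1, 1 := 1, 2 := 2 * 2 ^ M))"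
proof -
  have "log_abs (2 * 2 ^ M) = real (Suc M) * log_abs 2"
    by (simp add: log_abs_def of_rat_mult of_rat_power ln_mult ln_realpow algebra_simps)
  moreover have "0 < log_abs 2" by (simp add: log_abs_def)
  ultimately have "sgn (of_int k * log_abs 2) = sgn (of_int k * log_abs (2 * 2 ^ M))" for k
    by (simp add: sgn_mult)
  then show ?thesis
    by (auto simp: similar_def log_comb_def intro: exI[of _ 1] exI[of _ 2])
qed

theorem corollary1:
  shows "\<not> (\<exists>\<phi>. fv \<phi> \<subseteq> {0, 1, 2} \<and>
            (\<forall>a b c :: rat. sat ((\<lambda>_. 0)(0 := a, 1 := b, 2 := c)) \<phi> \<longleftrightarrow> c = a + b))"
proof
  assume "\<exists>\<phi>. fv \<phi> \<subseteq> {0, 1, 2} \<and>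
            (\<forall>a b c :: rat. sat ((\<lambda>_. 0)(0 := a, 1 := b, 2 := c)) \<phi> \<longleftrightarrow> c = a + b)"
  then obtain \<phi> where fv: "fv \<phi> \<subseteq> {0, 1, 2}"
    and add: "\<And>a b c :: rat. sat ((\<lambda>_. 0)(0 := a, 1 := b, 2 := c)) \<phi> \<longleftrightarrow> c = a + b" by blast
  define M where "M = exp_bound (qdepth \<phi>) (atom_deg \<phi>)"
  have "sat ((\<lambda>_. 0)(0 := 1, 1 := 1, 2 := 2)) \<phi> \<longleftrightarrow> sat ((\<lambda>_. 0)(0 := 1, 1 := 1, 2 := 2 * 2 ^ M)) \<phi>"
    using similar_sat_iff[OF order.refl order.refl fv similar_one_one_two] unfolding M_def .
  moreover have "(1 :: rat) < 2 ^ M"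
    using exp_bound_pos unfolding M_def by (intro one_less_power) auto
  ultimately show False using add by simp
qed

end
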